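(* Let $p,q$ be consecutive patterns of length 4 satisfying the standing assumptions below, and let $\epsilon\in I_n$ with $T:=\operatorname{Em}(p,\epsilon)$. Consider the following iterative procedure: (a) compute $T=\operatorname{Em}(p,\epsilon)$; (b) change all occurrences of $p$ at positions in $T$ to $q$, and call the resulting sequence $\epsilon'$; (c) let $S=\operatorname{Em}(q,\epsilon')$ and change all occurrences of $q$ at positions in $S\setminus T$ to $p$, calling the result again $\epsilon'$; (d) repeat step (c) until $S\setminus T=\emptyset$, so that $\epsilon'$ has $q$ occurring exactly at the positions in $T$. Then the output $\epsilon'$ of this procedure equals $\phi_{=T}(\epsilon)$, where $\phi_{=T}$ is the recursively defined bijection described below.
   Context: An inversion sequence of length $n$ is an integer sequence $\epsilon_1\cdots\epsilon_n$ with $0\le\epsilon_i<i$; $I_n$ is the set of them. The reduction of an integer word replaces each occurrence of its $k$-th smallest distinct value by $k-1$. A consecutive pattern $p=\underline{p_1p_2p_3p_4}$ occurs in $\epsilon$ at position $i$ if the reduction of $\epsilon_i\cdots\epsilon_{i+3}$ is $p_1p_2p_3p_4$; $\operatorname{Em}(p,\epsilon)$ is the set of such $i$. A pattern is non-overlapping if no two of its occurrences in any sequence overlap in more than one entry. Standing assumptions: $p$ and $q$ are each non-overlapping, agree in their first entries and in their last entries, have the same maximum entry $d$, and each contains every value in $\{0,\dots,d\}$. Change operation: if $p$ occurs at $i$, let $f$ be the order-preserving bijection from $\{0,\dots,d\}$ onto the set of values $\{\epsilon_i,\dots,\epsilon_{i+3}\}$ (so $\epsilon_{i+j-1}=f(p_j)$);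 changing the occurrence to $q$ replaces $\epsilon_{i+j-1}$ by $f(q_j)$, $j=1,\dots,4$ (symmetrically from $q$ to $p$). It is assumed such changes on inversion sequences always yield inversion sequences. Let $I_{n,p}(\supseteq T)=\{\epsilon\in I_n:\operatorname{Em}(p,\epsilon)\supseteq T\}$, $I_{n,p}(=T)=\{\epsilon\in I_n:\operatorname{Em}(p,\epsilon)=T\}$, and similarly for $q$. $\phi_{\ge T}:I_{n,p}(\supseteq T)\to I_{n,q}(\supseteq T)$ changes the occurrences of $p$ at all positions of $T$ to $q$; it is assumed to be a bijection, with inverse $\phi^{-1}_{\ge T}$ changing the occurrences of $q$ at positions of $T$ to $p$. The maps $\phi_{=T}:I_{n,p}(=T)\to I_{n,q}(=T)$ and $\psi_{=T}=\phi_{=T}^{-1}$ are defined by mutual recursion: to compute $\phi_{=T}(\epsilon)$, set $\eta:=\phi_{\ge T}(\epsilon)$; then repeatedly let $S:=\operatorname{Em}(q,\eta)$; if $S=T$ output $\eta$, otherwise (then $S\supsetneq T$) replace $\eta$ by $\phi_{\ge T}(\psi_{=S}(\eta))$ and repeat. To compute $\psi_{=T}(\eta)$, set $\epsilon:=\phi^{-1}_{\ge T}(\eta)$; then repeatedly let $R:=\operatorname{Em}(p,\epsilon)$; if $R=T$ output $\epsilon$, otherwise replace $\epsilon$ by $\phi^{-1}_{\ge T}(\phi_{=R}(\epsilon))$ and repeat. *)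

theory Defs
  imports Main
begin

text \<open>Words are lists of natural numbers; positions are 1-indexed as in the paper,
  so position i of xs is xs ! (i - 1).\<close>

definition inv_seq :: "nat \<Rightarrow> nat list \<Rightarrow> bool" where
  "inv_seq n xs \<longleftrightarrow> length xs = n \<and> (\<forall>i<n. xs ! i < Suc i)"

definition red :: "nat list \<Rightarrow> nat list" where
  "red w = map (\<lambda>x. card {y \<in> set w. y < x}) w"

definition window :: "nat \<Rightarrow> nat list \<Rightarrow> nat \<Rightarrow> nat list" where
  "window m xs i = take m (drop (i - 1) xs)"

definition Em :: "nat list \<Rightarrow> nat list \<Rightarrow> nat set" where
  "Em p xs = {i. 1 \<le> i \<and> i + length p \<le> length xs + 1 \<and> red (window (length p) xs i) = p}"

definition non_overlapping :: "nat list \<Rightarrow> bool" where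
  "non_overlapping p \<longleftrightarrow>
     (\<forall>(w::nat list) i j. i \<in> Em p w \<longrightarrow> j \<in> Em p w \<longrightarrow> i < j \<longrightarrow> i + length p - 1 \<le> j)"

text \<open>Change the occurrence (of some pattern) at position i into the pattern r:
  with f the order preserving bijection from {0..d} onto the values of the window,
  entry i+j-1 becomes f(r_j).\<close>
definition change :: "nat list \<Rightarrow> nat list \<Rightarrow> nat \<Rightarrow> nat list" where
  "change r xs i =
     (let vs = sorted_list_of_set (set (window (length r) xs i)) in
      map (\<lambda>k. if i - 1 \<le> k \<and> k < i - 1 + length r then vs ! (r ! (k - (i - 1))) else xs ! k)
          [0..<length xs])"

text \<open>Change the occurrences at all positions of T into r (phi_{>=T} with r = q,
  its inverse with r = p).\<close>
definition change_all :: "nat list \<Rightarrow> nat set \<Rightarrow> nat list \<Rightarrow> nat list" where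
  "change_all r T xs = foldl (\<lambda>ys i. change r ys i) xs (sorted_list_of_set T)"

definition standing :: "nat list \<Rightarrow> nat list \<Rightarrow> bool" where
  "standing p q \<longleftrightarrow>
     length p = 4 \<and> length q = 4 \<and>
     non_overlapping p \<and> non_overlapping q \<and>
     hd p = hd q \<and> last p = last q \<and>
     Max (set p) = Max (set q) \<and>
     set p = {0..Max (set p)} \<and> set q = {0..Max (set q)} \<and>
     (\<forall>m xs i. inv_seq m xs \<longrightarrow> i \<in> Em p xs \<longrightarrow> inv_seq m (change q xs i)) \<and>
     (\<forall>m xs i. inv_seq m xs \<longrightarrow> i \<in> Em q xs \<longrightarrow> inv_seq m (change p xs i)) \<and>
     (\<forall>m T. bij_betw (change_all q T)
                {xs. inv_seq m xs \<and> T \<subseteq> Em p xs} {ys. inv_seq m ys \<and> T \<subseteq> Em q ys} \<and>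
             (\<forall>ys. inv_seq m ys \<and> T \<subseteq> Em q ys \<longrightarrow>
                   change_all q T (change_all p T ys) = ys \<and>
                   inv_seq m (change_all p T ys) \<and> T \<subseteq> Em p (change_all p T ys)))"

text \<open>Big-step semantics of the mutually recursive maps phi_{=T} (phi_eq) and
  psi_{=T} (psi_eq), including their repeat loops. phi_eq p q T eps eta means that the
  computation of phi_{=T}(eps) terminates with output eta (the computation is deterministic).\<close>
inductive phi_eq :: "nat list \<Rightarrow> nat list \<Rightarrow> nat set \<Rightarrow> nat list \<Rightarrow> nat list \<Rightarrow> bool"
  and phi_loop :: "nat list \<Rightarrow> nat list \<Rightarrow> nat set \<Rightarrow> nat list \<Rightarrow> nat list \<Rightarrow> bool"
  and psi_eq :: "nat list \<Rightarrow> nat list \<Rightarrow> nat set \<Rightarrow> nat list \<Rightarrow> nat list \<Rightarrow> bool"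
  and psi_loop :: "nat list \<Rightarrow> nat list \<Rightarrow> nat set \<Rightarrow> nat list \<Rightarrow> nat list \<Rightarrow> bool"
  for p q :: "nat list" where
  phi_start: "phi_loop p q T (change_all q T eps) eta \<Longrightarrow> phi_eq p q T eps eta"
| phi_stop: "Em q eta = T \<Longrightarrow> phi_loop p q T eta eta"
| phi_step: "Em q eta \<noteq> T \<Longrightarrow> psi_eq p q (Em q eta) eta eps \<Longrightarrow>
              phi_loop p q T (change_all q T eps) eta' \<Longrightarrow> phi_loop p q T eta eta'"
| psi_start: "psi_loop p q T (change_all p T eta) eps \<Longrightarrow> psi_eq p q T eta eps"
| psi_stop: "Em p eps = T \<Longrightarrow> psi_loop p q T eps eps"
| psi_step: "Em p eps \<noteq> T \<Longrightarrow> phi_eq p q (Em p eps) eps eta \<Longrightarrow>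
              psi_loop p q T (change_all p T eta) eps' \<Longrightarrow> psi_loop p q T eps eps'"

inductive proc_loop :: "nat list \<Rightarrow> nat list \<Rightarrow> nat set \<Rightarrow> nat list \<Rightarrow> nat list \<Rightarrow> bool"
  for p q :: "nat list" where
  proc_stop: "Em q eps' - T = {} \<Longrightarrow> proc_loop p q T eps' eps'"
| proc_step: "Em q eps' - T \<noteq> {} \<Longrightarrow> proc_loop p q T (change_all p (Em q eps' - T) eps') out \<Longrightarrow>
              proc_loop p q T eps' out"

text \<open>Steps (a)-(b) followed by the loop; procedure p q eps out means it terminates with out.\<close>
definition procedure :: "nat list \<Rightarrow> nat list \<Rightarrow> nat list \<Rightarrow> nat list \<Rightarrow> bool" where
  "procedure p q eps out \<longleftrightarrow> proc_loop p q (Em p eps) (change_all q (Em p eps) eps) out"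

end

(* Call a revert step the change of a single q-occurrence outside T back into p. Occurrences
   of a non-overlapping pattern share at most one entry, and p and q agree in their first and
   last entries, so changes at distinct occurrences touch disjoint entries and commute: revert
   steps have the diamond property. Hence the procedure, which performs all available revert
   steps at once, computes the unique revert normal form of phi_{>=T}(eps).
   That phi_{=T}(eps) is this normal form is shown by downward induction on T, for (p, q) and
   (q, p) simultaneously, psi_{=S} being phi_{=S} with p and q exchanged. By induction, psi_{=S}
   is computed by revert steps for (q, p) and S; applying phi_{>=T} turns them into revert steps
   for (p, q) and T, so each round of the loop of phi_{=T} stays joinable with its start. The
   rounds are injective and never return to phi_{>=T}(eps), so in the finite set of inversion
   sequences the loop ends, and it ends at the normal form. *)
theory Submission
  imports Defs
begin

section \<open>Diamond property and walks in finite sets\<close>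

definition diamondp :: "('a \<Rightarrow> 'a \<Rightarrow> bool) \<Rightarrow> bool" where
  "diamondp R \<longleftrightarrow> (\<forall>x y z. R x y \<longrightarrow> R x z \<longrightarrow> y \<noteq> z \<longrightarrow> (\<exists>w. R y w \<and> R z w))"

lemma diamondp_relpowp_step_to_normal_form:
  assumes "diamondp R" and "\<And>v. \<not> R u v"
  shows "(R ^^ k) x u \<Longrightarrow> R x y \<Longrightarrow> 0 < k \<and> (R ^^ (k - 1)) y u"
proof (induction k arbitrary: x y)
  case 0
  then show ?case using assms(2) by auto
next
  case (Suc k)
  obtain z where xz: "R x z" and zu: "(R ^^ k) z u"
    using relpowp_Suc_D2[OF Suc.prems(1)] by blast
  show ?case
  proof (cases "y = z")
    case True
    then show ?thesis using zu by simp
  next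
    case False
    then obtain w where yw: "R y w" and zw: "R z w"
      using assms(1) Suc.prems(2) xz unfolding diamondp_def by blast
    have "0 < k \<and> (R ^^ (k - 1)) w u" using Suc.IH[OF zu zw] .
    then show ?thesis using relpowp_Suc_I2[of R y w, OF yw] by fastforce
  qed
qed

lemma diamondp_relpowp_to_normal_form:
  assumes "diamondp R" and "\<And>v. \<not> R u v" and "(R ^^ k) x u"
  shows "(R ^^ j) x y \<Longrightarrow> j \<le> k \<and> (R ^^ (k - j)) y u"
proof (induction j arbitrary: y)
  case 0
  then show ?case using assms(3) by simp
next
  case (Suc j)
  obtain z where xz: "(R ^^ j) x z" and zy: "R z y"
    using relpowp_Suc_E[OF Suc.prems] by blast
  then have "j \<le> k" and "(R ^^ (k - j)) z u" using Suc.IH by auto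
  then show ?case
    using diamondp_relpowp_step_to_normal_form[OF assms(1,2) _ zy] by fastforce
qed

lemma diamondp_rtranclp_to_normal_form:
  assumes "diamondp R" and "\<And>v. \<not> R u v" and "R\<^sup>*\<^sup>* x u" and "R\<^sup>*\<^sup>* x y"
  shows "R\<^sup>*\<^sup>* y u"
proof -
  obtain k j where "(R ^^ k) x u" and "(R ^^ j) x y"
    using assms(3,4) rtranclp_imp_relpowp by metis
  then show ?thesis
    using diamondp_relpowp_to_normal_form[OF assms(1,2)] relpowp_imp_rtranclp by metis
qed

lemma diamondp_normal_form_unique:
  assumes "diamondp R" and "\<And>v. \<not> R u v" and "\<And>v. \<not> R u' v"
    and "R\<^sup>*\<^sup>* x u" and "R\<^sup>*\<^sup>* x u'"
  shows "u = u'"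
  using diamondp_rtranclp_to_normal_form[OF assms(1,3,5,4)] assms(2)
  by (auto elim: converse_rtranclpE)

lemma injective_walk_leaves:
  assumes "finite A" and "x \<in> A"
    and "\<And>y. y \<in> B \<Longrightarrow> \<exists>z \<in> A. R y z"
    and "\<And>y y' z. y \<in> B \<Longrightarrow> y' \<in> B \<Longrightarrow> R y z \<Longrightarrow> R y' z \<Longrightarrow> y = y'"
    and "\<And>y. y \<in> B \<Longrightarrow> \<not> R y x"
  shows "\<exists>u \<in> A - B. R\<^sup>*\<^sup>* x u"
  using assms
proof (induction A arbitrary: B x rule: finite_psubset_induct)
  case (psubset A)
  show ?case
  proof (cases "x \<in> B")
    case False
    then show ?thesis using psubset.prems(1) by blast
  next
    case True
    then obtain z where z: "z \<in> A" "R x z" using psubset.prems(2) by blast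
    have "z \<noteq> x" using z(2) psubset.prems(4)[OF True] by blast
    \<comment> \<open>Removing x keeps every hypothesis: x has no predecessor, and z none but x.\<close>
    have "\<exists>u \<in> (A - {x}) - (B - {x}). R\<^sup>*\<^sup>* z u"
    proof (rule psubset.IH)
      show "A - {x} \<subset> A" using psubset.prems(1) by blast
      show "z \<in> A - {x}" using z \<open>z \<noteq> x\<close> by blast
      show "\<exists>z' \<in> A - {x}. R y z'" if "y \<in> B - {x}" for y
        using psubset.prems(2,4) that by blast
      show "y = y'" if "y \<in> B - {x}" "y' \<in> B - {x}" "R y z'" "R y' z'" for y y' z'
        using psubset.prems(3) that by blast
      show "\<not> R y z" if "y \<in> B - {x}" for y
        using psubset.prems(3)[OF _ True _ z(2)] that by blast
    qed
    then show ?thesis using z(2) by (auto intro: converse_rtranclp_into_rtranclp)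
  qed
qed

lemma finite_superset_induct:
  assumes "finite U" and "T \<subseteq> U"
    and step: "\<And>T. T \<subseteq> U \<Longrightarrow> (\<And>S. T \<subset> S \<Longrightarrow> S \<subseteq> U \<Longrightarrow> P S) \<Longrightarrow> P T"
  shows "P T"
  using assms(2)
proof (induction "card (U - T)" arbitrary: T rule: less_induct)
  case less
  show ?case
  proof (rule step[OF less.prems])
    fix S assume "T \<subset> S" "S \<subseteq> U"
    then have "card (U - S) < card (U - T)"
      using assms(1) by (intro psubset_card_mono) auto
    then show "P S" using less.hyps \<open>S \<subseteq> U\<close> by blast
  qed
qed

section \<open>Reduction and windows\<close>

lemma card_less_sorted_list_of_set_nth:
  fixes A :: "nat set"
  assumes "finite A" and "j < card A"
  shows "card {y \<in> A. y < sorted_list_of_set A ! j} = j"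
proof -
  let ?xs = "sorted_list_of_set A"
  have sorted: "sorted_wrt (<) ?xs" and len: "length ?xs = card A" and "distinct ?xs"
    by simp_all
  have "{y \<in> A. y < ?xs ! j} = (!) ?xs ` {..<j}"
  proof (intro equalityI subsetI)
    fix y assume "y \<in> {y \<in> A. y < ?xs ! j}"
    then have "y \<in> set ?xs" and "y < ?xs ! j" using assms(1) by simp_all
    then obtain i where i: "i < card A" "y = ?xs ! i" "?xs ! i < ?xs ! j"
      using len by (auto simp: in_set_conv_nth)
    then have "i < j"
      using sorted_wrt_nth_less[OF sorted, of j i] assms(2) len by (metis not_less_iff_gr_or_eq)
    then show "y \<in> (!) ?xs ` {..<j}" using i by blast
  next
    fix y assume "y \<in> (!) ?xs ` {..<j}"
    then obtain i where "i < j" "y = ?xs ! i" by blast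
    then show "y \<in> {y \<in> A. y < ?xs ! j}"
      using sorted_wrt_nth_less[OF sorted] assms len nth_mem[of i ?xs] by fastforce
  qed
  moreover have "inj_on ((!) ?xs) {..<j}"
    using \<open>distinct ?xs\<close> assms(2) len by (auto intro!: inj_onI simp: nth_eq_iff_index_eq)
  ultimately show ?thesis by (simp add: card_image)
qed

lemma sorted_list_of_set_nth_card_less:
  fixes A :: "nat set"
  assumes "finite A" and "x \<in> A"
  shows "sorted_list_of_set A ! card {y \<in> A. y < x} = x"
proof -
  obtain i where "i < card A" "x = sorted_list_of_set A ! i"
    using assms by (metis in_set_conv_nth length_sorted_list_of_set set_sorted_list_of_set)
  then show ?thesis using card_less_sorted_list_of_set_nth assms(1) by simp
qed

lemma set_red: "set (red w) = {0..<card (set w)}"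
proof -
  have "card {y \<in> set w. y < x} < card (set w)" if "x \<in> set w" for x
    using that by (intro psubset_card_mono) auto
  moreover have "j \<in> (\<lambda>x. card {y \<in> set w. y < x}) ` set w" if j: "j < card (set w)" for j
  proof
    let ?x = "sorted_list_of_set (set w) ! j"
    show "?x \<in> set w"
      using j nth_mem[of j "sorted_list_of_set (set w)"] by simp
    show "j = card {y \<in> set w. y < ?x}"
      using card_less_sorted_list_of_set_nth[of "set w" j] j by simp
  qed
  ultimately show ?thesis by (auto simp: red_def)
qed

text \<open>window_values xs i ! k is f(k) for the order preserving bijection f onto the values of the
  window at i, as in the definition of change.\<close>
definition window_values :: "nat list \<Rightarrow> nat \<Rightarrow> nat list" where
  "window_values xs i = sorted_list_of_set (set (window 4 xs i))"

lemma length_window_values: "length (window_values xs i) = card (set (window 4 xs i))"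
  by (simp add: window_values_def)

lemma Em_iff: "length s = 4 \<Longrightarrow> i \<in> Em s xs \<longleftrightarrow> 1 \<le> i \<and> i + 3 \<le> length xs \<and> red (window 4 xs i) = s"
  by (auto simp: Em_def)

lemma nth_window: "1 \<le> i \<Longrightarrow> i + 3 \<le> length xs \<Longrightarrow> j < 4 \<Longrightarrow> window 4 xs i ! j = xs ! (i - 1 + j)"
  by (simp add: window_def)

lemma window_values_nth_pattern:
  assumes "length s = 4" and "i \<in> Em s xs" and "j < 4"
  shows "window_values xs i ! (s ! j) = xs ! (i - 1 + j)"
proof -
  let ?w = "window 4 xs i"
  have i: "1 \<le> i" "i + 3 \<le> length xs" "red ?w = s" using assms Em_iff by auto
  then have "length ?w = 4" by (simp add: window_def)
  then have "s ! j = card {y \<in> set ?w. y < ?w ! j}" and "?w ! j \<in> set ?w"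
    using i(3) assms(3) by (auto simp: red_def)
  then have "window_values xs i ! (s ! j) = ?w ! j"
    by (simp add: window_values_def sorted_list_of_set_nth_card_less)
  then show ?thesis using nth_window i assms(3) by simp
qed

lemma red_map_window_values:
  assumes "length s = 4" and "i \<in> Em s xs" and "set r = set s"
  shows "red (map ((!) (window_values xs i)) r) = r"
    and "set (map ((!) (window_values xs i)) r) = set (window 4 xs i)"
proof -
  let ?w = "window 4 xs i"
  have r: "set r = {0..<card (set ?w)}"
    using assms set_red[of ?w] Em_iff by auto
  have "set (map ((!) (window_values xs i)) r)
      = (!) (window_values xs i) ` {..<length (window_values xs i)}"
    using r by (simp add: length_window_values atLeast0LessThan)
  also have "\<dots> = set (window_values xs i)" by (auto simp: in_set_conv_nth)
  also have "\<dots> = set ?w" by (simp add: window_values_def)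
  finally show set_eq: "set (map ((!) (window_values xs i)) r) = set ?w" .
  have "card {y \<in> set ?w. y < window_values xs i ! j} = j" if "j \<in> set r" for j
    using that r card_less_sorted_list_of_set_nth by (simp add: window_values_def)
  then show "red (map ((!) (window_values xs i)) r) = r"
    unfolding red_def set_eq by (simp add: map_idI)
qed

lemma Em_subset_atMost: "Em s xs \<subseteq> {..Suc (length xs)}"
  unfolding Em_def by auto

lemma finite_Em: "finite (Em s xs)"
  using Em_subset_atMost finite_subset by blast

lemma change_all_empty [simp]: "change_all r {} xs = xs"
  by (simp add: change_all_def)

lemma change_all_singleton: "change_all r {i} xs = change r xs i"
  by (simp add: change_all_def)

section \<open>Simultaneous changes of occurrences\<close>

text \<open>Index k of a list is the paper's entry k + 1, so the occurrence at position t occupies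
  indices t - 1, ..., t + 2. Only its two inner entries are rewritten: the patterns changed
  into one another agree in their first and in their last entries.\<close>
definition change_simul :: "nat set \<Rightarrow> (nat \<Rightarrow> nat list) \<Rightarrow> nat list \<Rightarrow> nat list" where
  "change_simul D \<sigma> xs = map (\<lambda>k.
      if k \<in> D then window_values xs k ! (\<sigma> k ! 1)
      else if k \<noteq> 0 \<and> k - 1 \<in> D then window_values xs (k - 1) ! (\<sigma> (k - 1) ! 2)
      else xs ! k) [0..<length xs]"

lemma length_change_simul [simp]: "length (change_simul D \<sigma> xs) = length xs"
  by (simp add: change_simul_def)

lemma nth_change_simul:
  "k < length xs \<Longrightarrow> change_simul D \<sigma> xs ! k =
    (if k \<in> D then window_values xs k ! (\<sigma> k ! 1)
     else if k \<noteq> 0 \<and> k - 1 \<in> D then window_values xs (k - 1) ! (\<sigma> (k - 1) ! 2)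
     else xs ! k)"
  unfolding change_simul_def by (subst nth_map) auto

lemma change_simul_empty [simp]: "change_simul {} \<sigma> xs = xs"
  by (rule nth_equalityI) (auto simp: change_simul_def)

lemma change_simul_cong: "(\<And>t. t \<in> D \<Longrightarrow> \<sigma> t = \<tau> t) \<Longrightarrow> change_simul D \<sigma> xs = change_simul D \<tau> xs"
  by (rule nth_equalityI) (auto simp: change_simul_def)

lemma window_change_simul_apart:
  assumes "\<forall>t\<in>D. t + 3 \<le> j \<or> j + 3 \<le> t" and "1 \<le> j"
  shows "window 4 (change_simul D \<sigma> xs) j = window 4 xs j"
proof -
  have "change_simul D \<sigma> xs ! k = xs ! k" if "j - 1 \<le> k" "k < j + 3" "k < length xs" for k
    using assms that by (force simp: nth_change_simul)
  then show ?thesis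
    using assms(2) by (intro nth_equalityI) (auto simp: window_def)
qed

lemma Em_change_simul_apart:
  "length r = 4 \<Longrightarrow> \<forall>t\<in>D. t + 3 \<le> j \<or> j + 3 \<le> t \<Longrightarrow>
    j \<in> Em r (change_simul D \<sigma> xs) \<longleftrightarrow> j \<in> Em r xs"
  by (cases "1 \<le> j") (auto simp: Em_iff window_change_simul_apart)

locale compatible_patterns =
  fixes P :: "nat list set"
  assumes length_pattern: "s \<in> P \<Longrightarrow> length s = 4"
    and non_overlapping_pattern: "s \<in> P \<Longrightarrow> non_overlapping s"
    and first_entry: "s \<in> P \<Longrightarrow> r \<in> P \<Longrightarrow> r ! 0 = s ! 0"
    and last_entry: "s \<in> P \<Longrightarrow> r \<in> P \<Longrightarrow> r ! 3 = s ! 3"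
    and set_pattern: "s \<in> P \<Longrightarrow> r \<in> P \<Longrightarrow> set r = set s"
begin

lemma Em_bounds: "s \<in> P \<Longrightarrow> i \<in> Em s xs \<Longrightarrow> 1 \<le> i \<and> i + 3 \<le> length xs"
  using Em_iff length_pattern by blast

lemma Em_apart:
  assumes "s \<in> P" and "i \<in> Em s xs" and "j \<in> Em s xs" and "i \<noteq> j"
  shows "i + 3 \<le> j \<or> j + 3 \<le> i"
proof -
  have "i + 3 \<le> j" if "i \<in> Em s xs" "j \<in> Em s xs" "i < j" for i j
    using that non_overlapping_pattern[OF assms(1)] length_pattern[OF assms(1)]
    unfolding non_overlapping_def by fastforce
  then show ?thesis using assms(2-4) by (metis linorder_neqE_nat)
qed

lemma Em_apart_subset:
  "s \<in> P \<Longrightarrow> D \<subseteq> Em s xs \<Longrightarrow> j \<in> Em s xs \<Longrightarrow> j \<notin> D \<Longrightarrow> \<forall>t\<in>D. t + 3 \<le> j \<or> j + 3 \<le> t"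
  using Em_apart by blast

lemma window_change_simul:
  assumes s: "s \<in> P" and D: "D \<subseteq> Em s xs" and \<sigma>: "\<sigma> ` D \<subseteq> P" and t: "t \<in> D"
  shows "window 4 (change_simul D \<sigma> xs) t = map ((!) (window_values xs t)) (\<sigma> t)"
proof -
  have tE: "t \<in> Em s xs" using t D by auto
  have tb: "1 \<le> t" "t + 3 \<le> length xs" using Em_bounds[OF s tE] by auto
  have apart: "u + 3 \<le> t \<or> t + 3 \<le> u" if "u \<in> D" "u \<noteq> t" for u
    using Em_apart[OF s] D tE that by blast
  have \<sigma>t: "\<sigma> t \<in> P" using \<sigma> t by auto
  have "change_simul D \<sigma> xs ! (t - 1 + j) = window_values xs t ! (\<sigma> t ! j)" if "j < 4" for j
  proof -
    consider "j = 0" | "j = 1" | "j = 2" | "j = 3" using \<open>j < 4\<close> by linarith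
    then show ?thesis
    proof cases
      case 1
      have "t - 1 \<notin> D" "\<not> (t - 1 \<noteq> 0 \<and> t - 1 - 1 \<in> D)"
        using apart[of "t - 1"] apart[of "t - 1 - 1"] tb by fastforce+
      then show ?thesis using 1 tb window_values_nth_pattern[OF length_pattern[OF s] tE, of 0]
          first_entry[OF s \<sigma>t] by (auto simp: nth_change_simul)
    next
      case 4
      have "t + 2 \<notin> D" "t + 1 \<notin> D" using apart[of "t + 2"] apart[of "t + 1"] by fastforce+
      then show ?thesis using 4 tb window_values_nth_pattern[OF length_pattern[OF s] tE, of 3]
          last_entry[OF s \<sigma>t] by (simp add: nth_change_simul)
    qed (use t tb apart[of "t + 1"] in \<open>auto simp: nth_change_simul\<close>)
  qed
  then show ?thesis
    using tb length_pattern[OF \<sigma>t] by (intro nth_equalityI) (auto simp: window_def)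
qed

lemma Em_change_simul:
  assumes s: "s \<in> P" and D: "D \<subseteq> Em s xs" and \<sigma>: "\<sigma> ` D \<subseteq> P" and t: "t \<in> D"
  shows "t \<in> Em (\<sigma> t) (change_simul D \<sigma> xs)"
proof -
  have tE: "t \<in> Em s xs" and \<sigma>t: "\<sigma> t \<in> P" using t D \<sigma> by auto
  have "red (window 4 (change_simul D \<sigma> xs) t) = \<sigma> t"
    using window_change_simul[OF assms] red_map_window_values(1)[OF length_pattern[OF s] tE]
      set_pattern[OF s \<sigma>t] by simp
  then show ?thesis using Em_bounds[OF s tE] Em_iff length_pattern[OF \<sigma>t] by simp
qed

lemma window_values_change_simul:
  assumes s: "s \<in> P" and D: "D \<subseteq> Em s xs" and \<sigma>: "\<sigma> ` D \<subseteq> P" and t: "t \<in> Em s xs"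
  shows "window_values (change_simul D \<sigma> xs) t = window_values xs t"
proof (cases "t \<in> D")
  case True
  then have "\<sigma> t \<in> P" using \<sigma> by auto
  then have "set (window 4 (change_simul D \<sigma> xs) t) = set (window 4 xs t)"
    using window_change_simul[OF s D \<sigma> True] red_map_window_values(2)[OF length_pattern[OF s] t]
      set_pattern[OF s] by simp
  then show ?thesis by (simp add: window_values_def)
next
  case False
  then show ?thesis
    using window_change_simul_apart Em_apart_subset[OF s D t] Em_bounds[OF s t]
    by (simp add: window_values_def)
qed

lemma change_simul_change_simul:
  assumes s: "s \<in> P" and DE: "D \<union> E \<subseteq> Em s xs" and \<sigma>: "\<sigma> ` D \<subseteq> P"
  shows "change_simul E \<tau> (change_simul D \<sigma> xs)
    = change_simul (D \<union> E) (\<lambda>t. if t \<in> E then \<tau> t else \<sigma> t) xs"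
proof (rule nth_equalityI)
  fix k assume "k < length (change_simul E \<tau> (change_simul D \<sigma> xs))"
  then have k: "k < length xs" by simp
  have same_values: "window_values (change_simul D \<sigma> xs) t = window_values xs t" if "t \<in> D \<union> E" for t
    using window_values_change_simul[OF s _ \<sigma>] DE that by auto
  have "k \<notin> D" if "k \<noteq> 0" "k - 1 \<in> E"
    using Em_apart[OF s, of k xs "k - 1"] DE that by fastforce
  then show "change_simul E \<tau> (change_simul D \<sigma> xs) ! k
      = change_simul (D \<union> E) (\<lambda>t. if t \<in> E then \<tau> t else \<sigma> t) xs ! k"
    using k same_values by (auto simp: nth_change_simul)
qed simp

lemma change_simul_drop_unchanged:
  assumes s: "s \<in> P" and D: "D \<subseteq> Em s xs" and "D' \<subseteq> D"
    and unchanged: "\<And>t. t \<in> D - D' \<Longrightarrow> \<sigma> t = s"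
  shows "change_simul D \<sigma> xs = change_simul D' \<sigma> xs"
proof (rule nth_equalityI)
  fix k assume "k < length (change_simul D \<sigma> xs)"
  then have k: "k < length xs" by simp
  have entry1: "window_values xs t ! (s ! 1) = xs ! t" if "t \<in> D" for t
    using window_values_nth_pattern[OF length_pattern[OF s], of t xs 1] D that
      Em_bounds[OF s, of t xs] by auto
  have entry2: "window_values xs (k - 1) ! (s ! 2) = xs ! k" if "k \<noteq> 0" "k - 1 \<in> D"
  proof -
    have "1 \<le> k - 1" using Em_bounds[OF s, of "k - 1" xs] D that by auto
    then have "k - 1 - 1 + 2 = k" by simp
    then show ?thesis
      using window_values_nth_pattern[OF length_pattern[OF s], of "k - 1" xs 2] D that by auto
  qed
  have "k - 1 \<notin> D" if "k \<in> D" "k \<noteq> 0"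
    using Em_apart[OF s, of k xs "k - 1"] D that by fastforce
  then show "change_simul D \<sigma> xs ! k = change_simul D' \<sigma> xs ! k"
    using k \<open>D' \<subseteq> D\<close> unchanged entry1 entry2 by (auto simp: nth_change_simul)
qed simp

lemma change_eq_change_simul:
  assumes s: "s \<in> P" and r: "r \<in> P" and i: "i \<in> Em s xs"
  shows "change r xs i = change_simul {i} (\<lambda>_. r) xs"
proof (rule nth_equalityI)
  fix k assume "k < length (change r xs i)"
  then have k: "k < length xs" by (simp add: change_def)
  have i_bounds: "1 \<le> i" "i + 3 \<le> length xs" using Em_bounds[OF s i] by auto
  have change: "change r xs i ! k =
      (if i - 1 \<le> k \<and> k < i + 3 then window_values xs i ! (r ! (k - (i - 1))) else xs ! k)"
    using k length_pattern[OF r] i_bounds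
    unfolding change_def window_values_def Let_def by (subst nth_map) auto
  have first: "window_values xs i ! (r ! 0) = xs ! (i - 1)"
    using window_values_nth_pattern[OF length_pattern[OF s] i, of 0] first_entry[OF s r] by simp
  have last: "window_values xs i ! (r ! 3) = xs ! (i + 2)"
    using window_values_nth_pattern[OF length_pattern[OF s] i, of 3] last_entry[OF s r] i_bounds
    by simp
  consider "k = i - 1" | "k = i" | "k = i + 1" | "k = i + 2" | "k < i - 1 \<or> i + 2 < k"
    by linarith
  then show "change r xs i ! k = change_simul {i} (\<lambda>_. r) xs ! k"
  proof cases
    case 1
    then show ?thesis using change first k i_bounds by (auto simp: nth_change_simul)
  next
    case 4
    then show ?thesis using change last k i_bounds by (simp add: nth_change_simul)
  qed (use change k i_bounds in \<open>auto simp: nth_change_simul\<close>)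
qed (simp add: change_def)

lemma change_self: "s \<in> P \<Longrightarrow> i \<in> Em s xs \<Longrightarrow> change s xs i = xs"
  using change_eq_change_simul change_simul_drop_unchanged[of s "{i}" xs "{}"] by auto

lemma Em_change_simul_other:
  assumes "s \<in> P" and "D \<subseteq> Em s xs" and "i \<in> Em s xs" and "i \<notin> D"
  shows "i \<in> Em s (change_simul D \<sigma> xs)"
  using Em_change_simul_apart[OF length_pattern[OF assms(1)]] Em_apart_subset[OF assms] assms(3)
  by blast

lemma change_simul_insert:
  assumes s: "s \<in> P" and r: "r \<in> P" and "D \<subseteq> Em s xs" and "i \<in> Em s xs" and "i \<notin> D"
  shows "change_simul (insert i D) (\<lambda>_. r) xs = change r (change_simul D (\<lambda>_. r) xs) i"
proof -
  have "change r (change_simul D (\<lambda>_. r) xs) i = change_simul {i} (\<lambda>_. r) (change_simul D (\<lambda>_. r) xs)"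
    using change_eq_change_simul[OF s r] Em_change_simul_other[OF s] assms(3-5) by blast
  also have "\<dots> = change_simul (insert i D) (\<lambda>_. r) xs"
    using change_simul_change_simul[OF s, of D "{i}" xs "\<lambda>_. r" "\<lambda>_. r"] assms r by auto
  finally show ?thesis by simp
qed

lemma change_all_eq_change_simul:
  assumes s: "s \<in> P" and r: "r \<in> P" and T: "T \<subseteq> Em s xs"
  shows "change_all r T xs = change_simul T (\<lambda>_. r) xs"
proof -
  have "foldl (\<lambda>ys i. change r ys i) xs L = change_simul (set L) (\<lambda>_. r) xs"
    if "distinct L" "set L \<subseteq> Em s xs" for L
    using that
  proof (induction L rule: rev_induct)
    case (snoc i L)
    then show ?case using change_simul_insert[OF s r, of "set L" xs i] by simp
  qed simp
  then show ?thesis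
    using T finite_subset[OF T finite_Em] by (simp add: change_all_def)
qed

lemma Em_change_all:
  assumes s: "s \<in> P" and r: "r \<in> P" and T: "T \<subseteq> Em s xs"
  shows "T \<subseteq> Em r (change_all r T xs)"
  using Em_change_simul[OF s T, of "\<lambda>_. r"] r change_all_eq_change_simul[OF s r T] by auto

lemma change_all_change_all:
  assumes s: "s \<in> P" and r: "r \<in> P" and "T \<subseteq> S" and S: "S \<subseteq> Em r xs"
  shows "change_all r T (change_all s S xs) = change_all s (S - T) xs"
proof -
  have "T \<subseteq> Em s (change_all s S xs)" using Em_change_all[OF r s S] \<open>T \<subseteq> S\<close> by blast
  then have "change_all r T (change_all s S xs) = change_simul T (\<lambda>_. r) (change_simul S (\<lambda>_. s) xs)"
    using change_all_eq_change_simul[OF s r] change_all_eq_change_simul[OF r s S] by simp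
  also have "\<dots> = change_simul S (\<lambda>t. if t \<in> T then r else s) xs"
    using change_simul_change_simul[OF r, of S T xs "\<lambda>_. s" "\<lambda>_. r"] S \<open>T \<subseteq> S\<close> s
    by (auto simp: Un_absorb2)
  also have "\<dots> = change_simul (S - T) (\<lambda>t. if t \<in> T then r else s) xs"
    by (rule change_simul_drop_unchanged[OF r S]) auto
  also have "\<dots> = change_simul (S - T) (\<lambda>_. s) xs"
    by (rule change_simul_cong) simp
  also have "\<dots> = change_all s (S - T) xs"
    using change_all_eq_change_simul[OF r s subset_trans[OF Diff_subset S]] by simp
  finally show ?thesis .
qed

lemma change_all_inverse:
  "s \<in> P \<Longrightarrow> r \<in> P \<Longrightarrow> T \<subseteq> Em r xs \<Longrightarrow> change_all r T (change_all s T xs) = xs"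
  using change_all_change_all[of s r T T xs] by simp

lemma change_inverse: "s \<in> P \<Longrightarrow> r \<in> P \<Longrightarrow> i \<in> Em s xs \<Longrightarrow> change s (change r xs i) i = xs"
  using change_all_inverse[of r s "{i}" xs] by (simp add: change_all_singleton)

lemma change_all_change_commute:
  assumes s: "s \<in> P" and r: "r \<in> P" and T: "T \<subseteq> Em s xs" and t: "t \<in> Em s xs" "t \<notin> T"
  shows "change_all r T (change r xs t) = change r (change_all r T xs) t"
proof -
  have "T \<subseteq> Em s (change_simul {t} (\<lambda>_. r) xs)"
    using Em_change_simul_other[OF s] T t by blast
  then have "change_all r T (change r xs t) = change_simul T (\<lambda>_. r) (change_simul {t} (\<lambda>_. r) xs)"
    using change_eq_change_simul[OF s r t(1)] change_all_eq_change_simul[OF s r] by simp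
  also have "\<dots> = change_simul (insert t T) (\<lambda>_. r) xs"
    using change_simul_change_simul[OF s, of "{t}" T xs "\<lambda>_. r" "\<lambda>_. r"] T t r by simp
  also have "\<dots> = change r (change_all r T xs) t"
    using change_simul_insert[OF s r T t] change_all_eq_change_simul[OF s r T] by simp
  finally show ?thesis .
qed

end

section \<open>Revert steps\<close>

text \<open>A single step of (c) in the procedure: one r-occurrence outside T is changed into s.
  Step (c) itself performs all available such steps at once.\<close>
definition revert_step :: "nat list \<Rightarrow> nat list \<Rightarrow> nat set \<Rightarrow> nat list \<Rightarrow> nat list \<Rightarrow> bool" where
  "revert_step s r T xs ys \<longleftrightarrow> (\<exists>t \<in> Em r xs - T. ys = change s xs t)"

lemma no_revert_step: "Em r xs \<subseteq> T \<Longrightarrow> \<not> revert_step s r T xs ys"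
  by (auto simp: revert_step_def)

context compatible_patterns
begin

lemma diamondp_revert_step:
  assumes s: "s \<in> P" and r: "r \<in> P"
  shows "diamondp (revert_step s r T)"
  unfolding diamondp_def
proof (intro allI impI)
  fix xs ys zs assume "revert_step s r T xs ys" "revert_step s r T xs zs" "ys \<noteq> zs"
  then obtain t u where t: "t \<in> Em r xs - T" "ys = change s xs t"
    and u: "u \<in> Em r xs - T" "zs = change s xs u" and "t \<noteq> u"
    unfolding revert_step_def by blast
  have ys: "ys = change_simul {t} (\<lambda>_. s) xs" and zs: "zs = change_simul {u} (\<lambda>_. s) xs"
    using change_eq_change_simul[OF r s] t u by auto
  have "u \<in> Em r ys" and "t \<in> Em r zs"
    unfolding ys zs using Em_change_simul_other[OF r] t u \<open>t \<noteq> u\<close> by auto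
  moreover have "change s ys u = change_simul {t, u} (\<lambda>_. s) xs"
    and "change s zs t = change_simul {t, u} (\<lambda>_. s) xs"
    using change_simul_insert[OF r s, of "{t}" xs u] change_simul_insert[OF r s, of "{u}" xs t]
      t u ys zs \<open>t \<noteq> u\<close> by (auto simp: insert_commute)
  ultimately have "revert_step s r T ys (change_simul {t, u} (\<lambda>_. s) xs)"
    and "revert_step s r T zs (change_simul {t, u} (\<lambda>_. s) xs)"
    using t(1) u(1) unfolding revert_step_def by force+
  then show "\<exists>w. revert_step s r T ys w \<and> revert_step s r T zs w" by blast
qed

lemma Em_revert_step:
  assumes "s \<in> P" and r: "r \<in> P" and "revert_step s r T xs ys" and T: "T \<subseteq> Em r xs"
  shows "T \<subseteq> Em r ys"
proof -
  obtain t where t: "t \<in> Em r xs" "t \<notin> T" "ys = change s xs t"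
    using assms(3) unfolding revert_step_def by blast
  then have "ys = change_simul {t} (\<lambda>_. s) xs"
    using change_eq_change_simul[OF r assms(1)] by simp
  then show ?thesis using Em_change_simul_other[OF r, of "{t}" xs] T t by blast
qed

lemma Em_revert_steps:
  assumes "s \<in> P" and "r \<in> P" and "(revert_step s r T)\<^sup>*\<^sup>* xs ys" and "T \<subseteq> Em r xs"
  shows "T \<subseteq> Em r ys"
  using assms(3,4) by (induction rule: rtranclp_induct) (auto dest: Em_revert_step[OF assms(1,2)])

lemma revert_steps_change_all:
  assumes s: "s \<in> P" and r: "r \<in> P" and D: "D \<subseteq> Em r xs - T"
  shows "(revert_step s r T ^^ card D) xs (change_all s D xs)"
proof -
  have "(revert_step s r T ^^ card D) xs (change_simul D (\<lambda>_. s) xs)"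
    using finite_subset[OF D finite_Diff[OF finite_Em]] D
  proof (induction D rule: finite_induct)
    case (insert d D)
    then have "d \<in> Em r (change_simul D (\<lambda>_. s) xs) - T"
      using Em_change_simul_other[OF r] by blast
    then have "revert_step s r T (change_simul D (\<lambda>_. s) xs) (change_simul (insert d D) (\<lambda>_. s) xs)"
      using change_simul_insert[OF r s, of D xs d] insert unfolding revert_step_def by auto
    then show ?case using insert by (auto intro: relpowp_Suc_I)
  qed simp
  then show ?thesis using change_all_eq_change_simul[OF r s subset_trans[OF D Diff_subset]] by simp
qed

lemma proc_loop_revert_steps:
  assumes p: "p \<in> P" and q: "q \<in> P"
  shows "(revert_step p q T ^^ k) xs out \<Longrightarrow> Em q out \<subseteq> T \<Longrightarrow> proc_loop p q T xs out"
proof (induction k arbitrary: xs rule: less_induct)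
  case (less k)
  let ?D = "Em q xs - T"
  have normal: "\<And>v. \<not> revert_step p q T out v" using no_revert_step less.prems(2) by blast
  show ?case
  proof (cases "?D = {}")
    case True
    have "k = 0"
    proof (rule ccontr)
      assume "k \<noteq> 0"
      then obtain ys where "revert_step p q T xs ys"
        using less.prems(1) relpowp_Suc_D2 by (metis not0_implies_Suc)
      then show False using no_revert_step True by blast
    qed
    then show ?thesis using True less.prems(1) by (simp add: proc_stop)
  next
    case False
    have "(revert_step p q T ^^ card ?D) xs (change_all p ?D xs)"
      using revert_steps_change_all[OF p q] by blast
    then have "card ?D \<le> k" and "(revert_step p q T ^^ (k - card ?D)) (change_all p ?D xs) out"
      using diamondp_relpowp_to_normal_form[OF diamondp_revert_step[OF p q] normal less.prems(1)]
      by auto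
    moreover have "0 < card ?D" using False finite_Em by (simp add: card_gt_0_iff)
    ultimately show ?thesis
      using less.IH[of "k - card ?D"] less.prems(2) False by (auto intro: proc_step)
  qed
qed

lemma revert_step_transfer:
  assumes s: "s \<in> P" and r: "r \<in> P"
    and step: "revert_step r s S ys ys'" and S: "S \<subseteq> Em s ys" and "T \<subseteq> S"
  shows "revert_step s r T (change_all r T ys') (change_all r T ys)"
proof -
  obtain t where t: "t \<in> Em s ys" "t \<notin> S" "ys' = change r ys t"
    using step unfolding revert_step_def by blast
  have T: "T \<subseteq> Em s ys" and "t \<notin> T" using S \<open>T \<subseteq> S\<close> t(2) by auto
  let ?z = "change_all r T ys"
  have "t \<in> Em s ?z"
    using change_all_eq_change_simul[OF s r T] Em_change_simul_other[OF s T t(1) \<open>t \<notin> T\<close>] by simp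
  moreover have "change_all r T ys' = change r ?z t"
    using change_all_change_commute[OF s r T t(1) \<open>t \<notin> T\<close>] t(3) by simp
  ultimately have "t \<in> Em r (change_all r T ys')" and "change s (change_all r T ys') t = ?z"
    using Em_change_all[OF s r, of "{t}" ?z] change_inverse[OF s r]
    by (auto simp: change_all_singleton)
  then show ?thesis using \<open>t \<notin> T\<close> unfolding revert_step_def by force
qed

lemma revert_steps_transfer:
  assumes s: "s \<in> P" and r: "r \<in> P"
  shows "(revert_step r s S)\<^sup>*\<^sup>* zs ys \<Longrightarrow> S \<subseteq> Em s zs \<Longrightarrow> T \<subseteq> S \<Longrightarrow>
    (revert_step s r T)\<^sup>*\<^sup>* (change_all r T ys) (change_all r T zs)"
proof (induction rule: rtranclp_induct)
  case (step ys ys')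
  have "S \<subseteq> Em s ys" using Em_revert_steps[OF r s step.hyps(1) step.prems(1)] .
  then have "revert_step s r T (change_all r T ys') (change_all r T ys)"
    using revert_step_transfer[OF s r step.hyps(2) _ step.prems(2)] by blast
  then show ?case using step.IH step.prems by (auto intro: converse_rtranclp_into_rtranclp)
qed simp

lemma revert_steps_change_all_transfer:
  assumes s: "s \<in> P" and r: "r \<in> P" and "T \<subseteq> S" and S: "S \<subseteq> Em r xs"
    and "(revert_step r s S)\<^sup>*\<^sup>* (change_all s S xs) ys"
  shows "(revert_step s r T)\<^sup>*\<^sup>* (change_all r T ys) (change_all s (S - T) xs)"
  using revert_steps_transfer[OF s r assms(5) Em_change_all[OF r s S] assms(3)]
    change_all_change_all[OF s r assms(3) S] by simp

end

locale inversion_compatible_patterns = compatible_patterns +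
  assumes inv_seq_change_distinct:
    "s \<in> P \<Longrightarrow> r \<in> P \<Longrightarrow> s \<noteq> r \<Longrightarrow> inv_seq m xs \<Longrightarrow> i \<in> Em s xs \<Longrightarrow> inv_seq m (change r xs i)"
begin

lemma inv_seq_change: "s \<in> P \<Longrightarrow> r \<in> P \<Longrightarrow> inv_seq m xs \<Longrightarrow> i \<in> Em s xs \<Longrightarrow> inv_seq m (change r xs i)"
  using inv_seq_change_distinct change_self by (cases "s = r") auto

lemma inv_seq_change_all:
  assumes s: "s \<in> P" and r: "r \<in> P" and T: "T \<subseteq> Em s xs" and "inv_seq m xs"
  shows "inv_seq m (change_all r T xs)"
proof -
  have "inv_seq m (change_simul T (\<lambda>_. r) xs)"
    using finite_subset[OF T finite_Em] T
  proof (induction T rule: finite_induct)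
    case (insert i T)
    then have "i \<in> Em s (change_simul T (\<lambda>_. r) xs)"
      using Em_change_simul_other[OF s] by blast
    then show ?case
      using change_simul_insert[OF s r, of T xs i] inv_seq_change[OF s r] insert by simp
  qed (simp add: \<open>inv_seq m xs\<close>)
  then show ?thesis using change_all_eq_change_simul[OF s r T] by simp
qed

lemma inv_seq_revert_steps:
  assumes "s \<in> P" and "r \<in> P" and "(revert_step s r T)\<^sup>*\<^sup>* xs ys" and "inv_seq m xs"
  shows "inv_seq m ys"
  using assms(3,4)
  by (induction rule: rtranclp_induct) (auto simp: revert_step_def intro: inv_seq_change[OF assms(2,1)])

end

section \<open>The loop of phi\<close>

lemma finite_inv_seq: "finite {xs. inv_seq n xs}"
proof (rule finite_subset)
  show "{xs. inv_seq n xs} \<subseteq> {xs. set xs \<subseteq> {..<n} \<and> length xs = n}"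
    by (fastforce simp: inv_seq_def in_set_conv_nth intro: less_le_trans[OF _ Suc_leI])
  show "finite {xs. set xs \<subseteq> {..<n} \<and> length xs = n}"
    by (rule finite_lists_length_eq) simp
qed

lemma phi_psi_swap:
  shows "phi_eq p q T xs ys \<Longrightarrow> psi_eq q p T xs ys"
    and "phi_loop p q T xs ys \<Longrightarrow> psi_loop q p T xs ys"
    and "psi_eq p q T xs ys \<Longrightarrow> phi_eq q p T xs ys"
    and "psi_loop p q T xs ys \<Longrightarrow> phi_loop q p T xs ys"
  by (induction rule: phi_eq_phi_loop_psi_eq_psi_loop.inducts)
    (auto intro: phi_eq_phi_loop_psi_eq_psi_loop.intros)

definition phi_eq_normal_form :: "nat list \<Rightarrow> nat list \<Rightarrow> nat \<Rightarrow> nat set \<Rightarrow> bool" where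
  "phi_eq_normal_form s r n T \<longleftrightarrow> (\<forall>xs. inv_seq n xs \<and> Em s xs = T \<longrightarrow>
     (\<exists>out. (revert_step s r T)\<^sup>*\<^sup>* (change_all r T xs) out \<and> Em r out = T \<and> phi_eq s r T xs out))"

text \<open>One round of the loop of phi_{=T} at \<eta>, with S = Em r \<eta>: psi_{=S}(\<eta>) evaluates to ys
  and the loop continues with phi_{\<ge>T}(ys). The revert steps from phi_{\<ge>S}^{-1}(\<eta>) to ys are
  what the induction on S provides about psi_{=S}.\<close>
definition phi_loop_step :: "nat list \<Rightarrow> nat list \<Rightarrow> nat set \<Rightarrow> nat list \<Rightarrow> nat list \<Rightarrow> bool" where
  "phi_loop_step s r T \<eta> \<eta>' \<longleftrightarrow> T \<subset> Em r \<eta> \<and>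
     (\<exists>ys. (revert_step r s (Em r \<eta>))\<^sup>*\<^sup>* (change_all s (Em r \<eta>) \<eta>) ys \<and> Em s ys = Em r \<eta> \<and>
       psi_eq s r (Em r \<eta>) \<eta> ys \<and> \<eta>' = change_all r T ys)"

context inversion_compatible_patterns
begin

lemma phi_loop_step_exists:
  assumes "phi_eq_normal_form r s n (Em r \<eta>)" and "inv_seq n \<eta>" and "T \<subset> Em r \<eta>"
  shows "\<exists>\<eta>'. phi_loop_step s r T \<eta> \<eta>'"
  using assms unfolding phi_eq_normal_form_def phi_loop_step_def by (blast dest: phi_psi_swap(1))

lemma phi_loop_step_invariant:
  assumes s: "s \<in> P" and r: "r \<in> P" and "phi_loop_step s r T \<eta> \<eta>'" and "inv_seq n \<eta>"
  shows "inv_seq n \<eta>' \<and> T \<subseteq> Em r \<eta>'"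
proof -
  obtain ys where "T \<subset> Em r \<eta>" and ys: "(revert_step r s (Em r \<eta>))\<^sup>*\<^sup>* (change_all s (Em r \<eta>) \<eta>) ys"
    and "Em s ys = Em r \<eta>" and \<eta>': "\<eta>' = change_all r T ys"
    using assms(3) unfolding phi_loop_step_def by blast
  then have T: "T \<subseteq> Em s ys" by blast
  have "inv_seq n ys"
    using inv_seq_revert_steps[OF r s ys] inv_seq_change_all[OF r s subset_refl \<open>inv_seq n \<eta>\<close>] .
  then show ?thesis using inv_seq_change_all[OF s r T] Em_change_all[OF s r T] \<eta>' by simp
qed

lemma phi_loop_step_join:
  assumes s: "s \<in> P" and r: "r \<in> P" and "phi_loop_step s r T \<eta> \<eta>'"
  shows "\<exists>w. (revert_step s r T)\<^sup>*\<^sup>* \<eta> w \<and> (revert_step s r T)\<^sup>*\<^sup>* \<eta>' w"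
proof -
  obtain ys where "T \<subset> Em r \<eta>" and ys: "(revert_step r s (Em r \<eta>))\<^sup>*\<^sup>* (change_all s (Em r \<eta>) \<eta>) ys"
    and \<eta>': "\<eta>' = change_all r T ys"
    using assms(3) unfolding phi_loop_step_def by blast
  have "(revert_step s r T)\<^sup>*\<^sup>* \<eta> (change_all s (Em r \<eta> - T) \<eta>)"
    using revert_steps_change_all[OF s r, of "Em r \<eta> - T" \<eta> T] by (blast intro: relpowp_imp_rtranclp)
  moreover have "(revert_step s r T)\<^sup>*\<^sup>* \<eta>' (change_all s (Em r \<eta> - T) \<eta>)"
    using revert_steps_change_all_transfer[OF s r _ subset_refl ys] \<open>T \<subset> Em r \<eta>\<close> \<eta>' by blast
  ultimately show ?thesis by blast
qed

lemma phi_loop_step_inj: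
  assumes s: "s \<in> P" and r: "r \<in> P"
    and step1: "phi_loop_step s r T \<eta>\<^sub>1 \<eta>'" and step2: "phi_loop_step s r T \<eta>\<^sub>2 \<eta>'"
  shows "\<eta>\<^sub>1 = \<eta>\<^sub>2"
proof -
  obtain ys\<^sub>1 where ys\<^sub>1: "(revert_step r s (Em r \<eta>\<^sub>1))\<^sup>*\<^sup>* (change_all s (Em r \<eta>\<^sub>1) \<eta>\<^sub>1) ys\<^sub>1"
    and S\<^sub>1: "Em s ys\<^sub>1 = Em r \<eta>\<^sub>1" "T \<subset> Em r \<eta>\<^sub>1" and \<eta>'\<^sub>1: "\<eta>' = change_all r T ys\<^sub>1"
    using step1 unfolding phi_loop_step_def by blast
  obtain ys\<^sub>2 where ys\<^sub>2: "(revert_step r s (Em r \<eta>\<^sub>2))\<^sup>*\<^sup>* (change_all s (Em r \<eta>\<^sub>2) \<eta>\<^sub>2) ys\<^sub>2"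
    and S\<^sub>2: "Em s ys\<^sub>2 = Em r \<eta>\<^sub>2" "T \<subset> Em r \<eta>\<^sub>2" and \<eta>'\<^sub>2: "\<eta>' = change_all r T ys\<^sub>2"
    using step2 unfolding phi_loop_step_def by blast
  have "ys\<^sub>1 = ys\<^sub>2"
    using change_all_inverse[OF r s, of T ys\<^sub>1] change_all_inverse[OF r s, of T ys\<^sub>2] S\<^sub>1 S\<^sub>2 \<eta>'\<^sub>1 \<eta>'\<^sub>2
    by auto
  then have S: "Em r \<eta>\<^sub>2 = Em r \<eta>\<^sub>1" using S\<^sub>1 S\<^sub>2 by simp
  \<comment> \<open>Both are revert normal forms reached from phi_{\<ge>S}(ys), so the diamond property
    identifies them.\<close>
  have "(revert_step s r (Em r \<eta>\<^sub>1))\<^sup>*\<^sup>* (change_all r (Em r \<eta>\<^sub>1) ys\<^sub>1) \<eta>\<^sub>1"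
    using revert_steps_change_all_transfer[OF s r subset_refl subset_refl ys\<^sub>1] by simp
  moreover have "(revert_step s r (Em r \<eta>\<^sub>1))\<^sup>*\<^sup>* (change_all r (Em r \<eta>\<^sub>1) ys\<^sub>1) \<eta>\<^sub>2"
    using revert_steps_change_all_transfer[OF s r subset_refl subset_refl ys\<^sub>2] \<open>ys\<^sub>1 = ys\<^sub>2\<close> S
    by simp
  ultimately show ?thesis
    using diamondp_normal_form_unique[OF diamondp_revert_step[OF s r]] no_revert_step S by blast
qed

lemma phi_loop_step_not_to_start:
  assumes s: "s \<in> P" and r: "r \<in> P" and "Em s xs = T"
  shows "\<not> phi_loop_step s r T \<eta> (change_all r T xs)"
proof
  assume "phi_loop_step s r T \<eta> (change_all r T xs)"
  then obtain ys where "Em s ys = Em r \<eta>" "T \<subset> Em r \<eta>" "change_all r T xs = change_all r T ys"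
    unfolding phi_loop_step_def by blast
  moreover from this have "ys = xs"
    using change_all_inverse[OF r s, of T ys] change_all_inverse[OF r s, of T xs] assms(3) by auto
  ultimately show False using assms(3) by simp
qed

lemma phi_loop_of_steps:
  assumes s: "s \<in> P" and r: "r \<in> P"
    and "(phi_loop_step s r T)\<^sup>*\<^sup>* \<eta> out" and "Em r out = T"
  shows "phi_loop s r T \<eta> out \<and> (revert_step s r T)\<^sup>*\<^sup>* \<eta> out"
  using assms(3)
proof (induction rule: converse_rtranclp_induct)
  case base
  then show ?case using assms(4) by (simp add: phi_stop)
next
  case (step \<eta> \<eta>')
  obtain ys where "Em r \<eta> \<noteq> T" "psi_eq s r (Em r \<eta>) \<eta> ys" "\<eta>' = change_all r T ys"
    using step.hyps(1) unfolding phi_loop_step_def by blast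
  then have "phi_loop s r T \<eta> out" using step.IH phi_step by blast
  moreover obtain w where "(revert_step s r T)\<^sup>*\<^sup>* \<eta> w" and "(revert_step s r T)\<^sup>*\<^sup>* \<eta>' w"
    using phi_loop_step_join[OF s r step.hyps(1)] by blast
  moreover have "(revert_step s r T)\<^sup>*\<^sup>* w out"
    using diamondp_rtranclp_to_normal_form[OF diamondp_revert_step[OF s r] no_revert_step]
      assms(4) step.IH \<open>(revert_step s r T)\<^sup>*\<^sup>* \<eta>' w\<close> by blast
  ultimately show ?case using rtranclp_trans[of "revert_step s r T" \<eta> w out] by blast
qed

lemma phi_eq_normal_form_step:
  assumes s: "s \<in> P" and r: "r \<in> P"
    and IH: "\<And>S. T \<subset> S \<Longrightarrow> S \<subseteq> {..Suc n} \<Longrightarrow> phi_eq_normal_form r s n S"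
  shows "phi_eq_normal_form s r n T"
  unfolding phi_eq_normal_form_def
proof (intro allI impI)
  fix xs assume xs: "inv_seq n xs \<and> Em s xs = T"
  let ?A = "{\<eta>. inv_seq n \<eta> \<and> T \<subseteq> Em r \<eta>}" and ?B = "{\<eta>. inv_seq n \<eta> \<and> T \<subset> Em r \<eta>}"
  have "\<exists>out \<in> ?A - ?B. (phi_loop_step s r T)\<^sup>*\<^sup>* (change_all r T xs) out"
  proof (rule injective_walk_leaves)
    show "finite ?A" by (rule finite_subset[OF _ finite_inv_seq]) blast
    show "change_all r T xs \<in> ?A"
      using xs inv_seq_change_all[OF s r] Em_change_all[OF s r] by blast
    show "\<exists>\<eta>' \<in> ?A. phi_loop_step s r T \<eta> \<eta>'" if "\<eta> \<in> ?B" for \<eta>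
    proof -
      have \<eta>: "inv_seq n \<eta>" "T \<subset> Em r \<eta>" using that by auto
      have "Em r \<eta> \<subseteq> {..Suc n}" using Em_subset_atMost[of r \<eta>] \<eta>(1) by (simp add: inv_seq_def)
      then obtain \<eta>' where step: "phi_loop_step s r T \<eta> \<eta>'"
        using phi_loop_step_exists[OF IH[OF \<eta>(2)] \<eta>] by blast
      then show ?thesis using phi_loop_step_invariant[OF s r step \<eta>(1)] by blast
    qed
    show "\<eta> = \<eta>'" if "\<eta> \<in> ?B" "\<eta>' \<in> ?B"
      and "phi_loop_step s r T \<eta> \<zeta>" and "phi_loop_step s r T \<eta>' \<zeta>" for \<eta> \<eta>' \<zeta>
      using phi_loop_step_inj[OF s r that(3,4)] .
    show "\<not> phi_loop_step s r T \<eta> (change_all r T xs)" if "\<eta> \<in> ?B" for \<eta>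
      using phi_loop_step_not_to_start[OF s r] xs by blast
  qed
  then obtain out where "out \<in> ?A - ?B" and steps: "(phi_loop_step s r T)\<^sup>*\<^sup>* (change_all r T xs) out"
    by blast
  then have "Em r out = T" by auto
  then show "\<exists>out. (revert_step s r T)\<^sup>*\<^sup>* (change_all r T xs) out \<and> Em r out = T \<and> phi_eq s r T xs out"
    using phi_loop_of_steps[OF s r steps] phi_start by blast
qed

lemma phi_eq_normal_form:
  assumes "s \<in> P" and "r \<in> P"
  shows "phi_eq_normal_form s r n T"
proof (cases "T \<subseteq> {..Suc n}")
  case True
  have "\<forall>s \<in> P. \<forall>r \<in> P. phi_eq_normal_form s r n T" (is "?Q T")
  proof (rule finite_superset_induct[of "{..Suc n}" T ?Q, OF finite_atMost True])
    fix T' assume IH: "\<And>S. T' \<subset> S \<Longrightarrow> S \<subseteq> {..Suc n} \<Longrightarrow> ?Q S"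
    show "?Q T'"
    proof (intro ballI)
      fix s r assume "s \<in> P" "r \<in> P"
      then show "phi_eq_normal_form s r n T'"
        using phi_eq_normal_form_step[of s r T' n] IH by blast
    qed
  qed
  then show ?thesis using assms by blast
next
  case False
  have "Em s xs \<noteq> T" if "inv_seq n xs" for xs
  proof
    assume "Em s xs = T"
    then have "T \<subseteq> {..Suc n}" using Em_subset_atMost[of s xs] that by (simp add: inv_seq_def)
    with False show False by contradiction
  qed
  then show ?thesis unfolding phi_eq_normal_form_def by blast
qed

end

lemma standing_inversion_compatible_patterns:
  assumes "standing p q"
  shows "inversion_compatible_patterns {p, q}"
proof
  obtain "length p = 4" "length q = 4" "non_overlapping p" "non_overlapping q"
    "hd p = hd q" "last p = last q" "Max (set p) = Max (set q)"
    "set p = {0..Max (set p)}" "set q = {0..Max (set q)}"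
    and inv_pq: "\<And>m xs i. inv_seq m xs \<Longrightarrow> i \<in> Em p xs \<Longrightarrow> inv_seq m (change q xs i)"
    and inv_qp: "\<And>m xs i. inv_seq m xs \<Longrightarrow> i \<in> Em q xs \<Longrightarrow> inv_seq m (change p xs i)"
    using assms unfolding standing_def by (elim conjE) (rule that; blast)
  moreover from this have "p ! 0 = q ! 0" "p ! 3 = q ! 3"
    by (auto simp: hd_conv_nth last_conv_nth simp flip: length_greater_0_conv)
  ultimately show "s \<in> {p, q} \<Longrightarrow> length s = 4" "s \<in> {p, q} \<Longrightarrow> non_overlapping s"
    "s \<in> {p, q} \<Longrightarrow> r \<in> {p, q} \<Longrightarrow> r ! 0 = s ! 0"
    "s \<in> {p, q} \<Longrightarrow> r \<in> {p, q} \<Longrightarrow> r ! 3 = s ! 3"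
    "s \<in> {p, q} \<Longrightarrow> r \<in> {p, q} \<Longrightarrow> set r = set s" for s r
    by auto
  show "inv_seq m (change r xs i)"
    if "s \<in> {p, q}" "r \<in> {p, q}" "s \<noteq> r" "inv_seq m xs" "i \<in> Em s xs" for s r m xs i
    using that inv_pq inv_qp by auto
qed

theorem theorem2:
  fixes p q eps :: "nat list" and n :: nat
  assumes "standing p q"
    and "inv_seq n eps"
  shows "\<exists>out. procedure p q eps out \<and> phi_eq p q (Em p eps) eps out"
proof -
  interpret inversion_compatible_patterns "{p, q}"
    using standing_inversion_compatible_patterns[OF assms(1)] .
  have "phi_eq_normal_form p q n (Em p eps)" by (rule phi_eq_normal_form) auto
  then obtain out where steps: "(revert_step p q (Em p eps))\<^sup>*\<^sup>* (change_all q (Em p eps) eps) out"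
    and normal: "Em q out = Em p eps" and phi: "phi_eq p q (Em p eps) eps out"
    using assms(2) unfolding phi_eq_normal_form_def by blast
  obtain k where "(revert_step p q (Em p eps) ^^ k) (change_all q (Em p eps) eps) out"
    using rtranclp_imp_relpowp[OF steps] by blast
  then have "proc_loop p q (Em p eps) (change_all q (Em p eps) eps) out"
    by (rule proc_loop_revert_steps[rotated 2]) (use normal in auto)
  then show ?thesis unfolding procedure_def using phi by blast
qed

end
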